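(* Let $A,B\in \mathbb{C}^{n\times n}$. Then the following are equivalent: (1) $A\leq^{\mathrm{cEP}}B$. (2) There exist $E_1=AA^{\mathrm{cEP}}$ and $E_2=E_2^*=E_2^2$ such that $A=\begin{pmatrix} T_1&S_1&S_2\\ 0&N_1&N_2\\ 0&N_3&N_4\end{pmatrix}_{E\times E}$, $B=\begin{pmatrix} T_1&S_1&S_2\\ 0&T_3&T_4\\ 0&0&T_5\end{pmatrix}_{E\times E}$, where $E=\{ E_1,E_2,I_n-E_1-E_2\}$, $T_1\in (E_1\mathbb{C}^{n\times n}E_1)^{-1}$, $T_3\in (E_2\mathbb{C}^{n\times n}E_2)^{-1}$ and $N_1+N_2+N_3+N_4,\ T_5\in \mathbb{C}^{n\times n}$ are nilpotent.
   Context: $\mathbb{C}^{n\times n}$ is the algebra of complex $n\times n$ matrices with conjugate transpose. The core-EP inverse $A^{\mathrm{cEP}}$ of $A$ is the unique $X$ with $XA^{k+1}=A^k$, $AX^2=X$, $(AX)^*=AX$ for some $k\in\mathbb{N}$. The core-EP order is $A\leq^{\mathrm{cEP}}B$ iff $AA^{\mathrm{cEP}}=BA^{\mathrm{cEP}}$ and $A^{\mathrm{cEP}}A=A^{\mathrm{cEP}}B$. For a set $E=\{E_1,E_2,E_3\}$ of idempotents summing to $I_n$ with $E_iE_j=0$ ($i\neq j$), a matrix $X$ is written $X=(E_iXE_j)_{E\times E}$. *)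

theory Defs
  imports "HOL-Analysis.Analysis"
begin

type_synonym 'n cmat = "complex ^'n ^'n"

definition cadj :: "'n::finite cmat \<Rightarrow> 'n cmat" where
  "cadj M = (\<chi> i j. cnj (M $ j $ i))"

primrec mpow :: "'n::finite cmat \<Rightarrow> nat \<Rightarrow> 'n cmat" where
  "mpow M 0 = mat 1"
| "mpow M (Suc k) = M ** mpow M k"

definition is_core_EP_inv :: "'n::finite cmat \<Rightarrow> 'n cmat \<Rightarrow> bool" where
  "is_core_EP_inv A X \<longleftrightarrow>
     (\<exists>k::nat. X ** mpow A (k+1) = mpow A k) \<and> A ** (X ** X) = X \<and> cadj (A ** X) = A ** X"

definition core_EP :: "'n::finite cmat \<Rightarrow> 'n cmat" where
  "core_EP A = (THE X. is_core_EP_inv A X)"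

definition core_EP_le :: "'n::finite cmat \<Rightarrow> 'n cmat \<Rightarrow> bool" where
  "core_EP_le A B \<longleftrightarrow> A ** core_EP A = B ** core_EP A \<and> core_EP A ** A = core_EP A ** B"

definition nilpotent_mat :: "'n::finite cmat \<Rightarrow> bool" where
  "nilpotent_mat M \<longleftrightarrow> (\<exists>k. mpow M k = 0)"

definition idem_system3 :: "'n::finite cmat \<Rightarrow> 'n cmat \<Rightarrow> 'n cmat \<Rightarrow> bool" where
  "idem_system3 E1 E2 E3 \<longleftrightarrow>
     E1 ** E1 = E1 \<and> E2 ** E2 = E2 \<and> E3 ** E3 = E3 \<and> E1 + E2 + E3 = mat 1 \<and>
     E1 ** E2 = 0 \<and> E2 ** E1 = 0 \<and> E1 ** E3 = 0 \<and> E3 ** E1 = 0 \<and>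
     E2 ** E3 = 0 \<and> E3 ** E2 = 0"

text \<open>T is invertible in the corner ring P C^{n x n} P (P idempotent).\<close>
definition corner_invertible :: "'n::finite cmat \<Rightarrow> 'n cmat \<Rightarrow> bool" where
  "corner_invertible P T \<longleftrightarrow> P ** T ** P = T \<and>
     (\<exists>Y. P ** Y ** P = Y \<and> T ** Y = P \<and> Y ** T = P)"

end

theory Submission
  imports Defs
begin

(* Let P = A A^cEP. Once the ranges of the powers A^k have stabilised, P is the orthogonal
   projector onto the range of A^k; relative to P the matrix A is block upper triangular with
   invertible corner P A P, whose corner inverse is A^cEP, and nilpotent complementary block
   (the core-EP decomposition). In these terms A <=cEP B says exactly that B has the same first
   block row and column as A, i.e. P B = P A and B P = A P. The core-EP decomposition of the
   compression (I - P) B (I - P) then splits I - P into E2 and E3 = I - P - E2 as required. *)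

definition orthogonal_projector :: "'n::finite cmat \<Rightarrow> bool" where
  "orthogonal_projector P \<longleftrightarrow> P ** P = P \<and> cadj P = P"

lemma matrix_add_rdistrib: "((A::'a::semiring_1^'n^'m) + B) ** C = A ** C + B ** C"
  by (vector matrix_matrix_mult_def sum.distrib[symmetric] field_simps)

lemma matrix_diff_ldistrib: "(A::'a::ring_1^'n^'m) ** (B - C) = A ** B - A ** C"
  by (vector matrix_matrix_mult_def sum_subtractf[symmetric] field_simps)

lemma matrix_diff_rdistrib: "((A::'a::ring_1^'n^'m) - B) ** C = A ** C - B ** C"
  by (vector matrix_matrix_mult_def sum_subtractf[symmetric] field_simps)

lemmas matrix_distribs =
  matrix_add_ldistrib matrix_add_rdistrib matrix_diff_ldistrib matrix_diff_rdistrib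

lemma cadj_matrix_mult: "cadj ((A::'n::finite cmat) ** B) = cadj B ** cadj A"
  by (simp add: cadj_def matrix_matrix_mult_def vec_eq_iff mult.commute)

lemma cadj_cadj [simp]: "cadj (cadj A) = A"
  by (simp add: cadj_def vec_eq_iff)

lemma cadj_zero [simp]: "cadj 0 = 0"
  by (simp add: cadj_def vec_eq_iff)

lemma mpow_Suc_right: "mpow M (Suc k) = mpow M k ** M"
  by (induction k) (simp_all add: matrix_mul_assoc)

lemma matrix_factor_through_range:
  fixes A :: "'a::semiring_1^'n^'m" and B :: "'a^'k^'m"
  assumes "range ((*v) A) \<subseteq> range ((*v) B)"
  obtains W where "A = B ** W"
proof -
  have "\<forall>j. \<exists>x. A *v axis j 1 = B *v x"
    using assms by blast
  then obtain y where y: "\<And>j. A *v axis j 1 = B *v y j"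
    by metis
  have "A $ i $ j = (B ** (\<chi> i j. y j $ i)) $ i $ j" for i j
  proof -
    have "A $ i $ j = (A *v axis j 1) $ i"
      by (simp add: matrix_vector_mult_def axis_def if_distrib cong: if_cong)
    also have "\<dots> = (B *v y j) $ i"
      by (simp only: y)
    finally show ?thesis
      by (simp add: matrix_vector_mult_def matrix_matrix_mult_def)
  qed
  then have "A = B ** (\<chi> i j. y j $ i)"
    by (simp add: vec_eq_iff)
  then show thesis by (rule that)
qed

lemma subspace_range_matrix_vector_mult: "subspace (range ((*v) (K::complex^'n^'m)))"
proof (rule linear_subspace_image[OF _ subspace_UNIV])
  show "linear ((*v) K)"
    by (rule linearI)
      (simp_all add: vec_eq_iff matrix_vector_mult_def sum.distrib scaleR_sum_right algebra_simps)
qed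

lemma inner_matrix_vector_mult_cadj:
  fixes K :: "'n::finite cmat"
  shows "inner (K *v w) z = inner w (cadj K *v z)"
proof -
  have inner_complex: "inner x y = Re (cnj x * y)" for x y :: complex
    by (simp add: inner_complex_def)
  have "inner (K *v w) z = Re (\<Sum>i\<in>UNIV. \<Sum>j\<in>UNIV. cnj (K $ i $ j) * cnj (w $ j) * z $ i)"
    by (simp add: inner_vec_def inner_complex matrix_vector_mult_def sum_distrib_right)
  also have "\<dots> = Re (\<Sum>j\<in>UNIV. \<Sum>i\<in>UNIV. cnj (w $ j) * (cnj (K $ i $ j) * z $ i))"
    by (subst sum.swap) (simp add: mult_ac)
  also have "\<dots> = inner w (cadj K *v z)"
    by (simp add: inner_vec_def inner_complex matrix_vector_mult_def cadj_def sum_distrib_left)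
  finally show ?thesis .
qed

(* The real orthogonal decomposition of complex^'n suffices: by the lemma above, a vector
   real-orthogonal to the range of K is annihilated by cadj K. *)
lemma normal_equation_solvable:
  fixes K :: "'n::finite cmat"
  obtains x where "cadj K *v (K *v x) = cadj K *v u"
proof -
  let ?S = "range ((*v) K)"
  obtain y z where y: "y \<in> span ?S" and z: "\<And>w. w \<in> span ?S \<Longrightarrow> orthogonal z w"
    and u: "u = y + z"
    using orthogonal_subspace_decomp_exists[of ?S u] by blast
  have "y \<in> ?S"
    using y span_eq_iff subspace_range_matrix_vector_mult by blast
  then obtain x where x: "y = K *v x" by blast
  have "orthogonal z (K *v (cadj K *v z))"
    by (rule z) (simp add: span_base)
  then have "inner (cadj K *v z) (cadj K *v z) = 0"
    by (simp add: orthogonal_def inner_commute inner_matrix_vector_mult_cadj)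
  then have "cadj K *v z = 0" by simp
  then show thesis
    using that[of x] by (simp add: u x matrix_vector_right_distrib)
qed

lemma orthogonal_projector_onto_range:
  fixes K :: "'n::finite cmat"
  obtains P Z where "orthogonal_projector P" "P ** K = K" "P = K ** Z"
proof -
  have "range ((*v) (cadj K)) \<subseteq> range ((*v) (cadj K ** K))"
    by (metis image_subsetI normal_equation_solvable matrix_vector_mul_assoc rangeI)
  then obtain Z where Z: "cadj K = cadj K ** K ** Z"
    by (rule matrix_factor_through_range)
  \<comment> \<open>From cadj K (I - P) = 0 and P = K Z one gets cadj P (I - P) = 0, hence P = cadj P P.\<close>
  define P where "P = K ** Z"
  have KP: "cadj K ** P = cadj K"
    using Z by (simp add: P_def matrix_mul_assoc)
  have PP: "cadj P ** P = cadj P"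
    using KP by (simp add: P_def cadj_matrix_mult flip: matrix_mul_assoc)
  then have herm: "cadj P = P"
    by (metis cadj_cadj cadj_matrix_mult)
  have "P ** K = K"
    by (metis KP herm cadj_cadj cadj_matrix_mult)
  then show thesis
    using that PP herm P_def orthogonal_projector_def by metis
qed

lemma range_mpow_stabilizes:
  fixes M :: "'n::finite cmat"
  obtains k W where "mpow M k = mpow M (Suc k) ** W"
proof -
  \<comment> \<open>The ranges decrease; at a power of minimal rank the next range cannot be smaller.\<close>
  define R where "R k = range ((*v) (mpow M k))" for k
  obtain k where k: "dim (R k) = (LEAST d. \<exists>k. dim (R k) = d)"
    using LeastI_ex[of "\<lambda>d. \<exists>k. dim (R k) = d"] by blast
  have "dim (R k) \<le> dim (R (Suc k))"
    unfolding k by (rule Least_le) blast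
  moreover have "R (Suc k) \<subseteq> R k"
    by (auto simp: R_def mpow_Suc_right simp del: mpow.simps simp flip: matrix_vector_mul_assoc)
  ultimately have "R k \<subseteq> R (Suc k)"
    using subspace_dim_equal subspace_range_matrix_vector_mult unfolding R_def by (metis order_refl)
  then show thesis
    using matrix_factor_through_range that unfolding R_def by blast
qed

lemma corner_left_right_inverse:
  fixes P T Y :: "'a::field^'n^'n"
  assumes P: "P ** P = P" and T: "P ** T ** P = T" and Y: "P ** Y ** P = Y" and TY: "T ** Y = P"
  shows "Y ** T = P"
proof -
  have TP: "T ** P = T" "P ** T = T" and YP: "Y ** P = Y" "P ** Y = Y"
    using P T Y by (metis matrix_mul_assoc)+
  \<comment> \<open>Padding with I - P gives a one-sided, hence two-sided, inverse in the full matrix ring.\<close>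
  have "(T + (mat 1 - P)) ** (Y + (mat 1 - P)) = mat 1"
    by (simp add: matrix_distribs TP YP TY P)
  then have "(Y + (mat 1 - P)) ** (T + (mat 1 - P)) = mat 1"
    by (simp add: matrix_left_right_inverse)
  then show ?thesis
    by (simp add: matrix_distribs TP YP P)
qed

lemma corner_invertibleI:
  assumes "P ** P = P" "P ** Y ** P = Y" "P ** M ** P ** Y = P" "Y ** (P ** M ** P) = P"
  shows "corner_invertible P (P ** M ** P)"
  unfolding corner_invertible_def using assms by (metis matrix_mul_assoc)

(* Wang's core-EP decomposition: P is the orthogonal projector onto the stable range of the
   powers of M. *)
lemma core_EP_decomposition:
  fixes M :: "'n::finite cmat"
  obtains P Y k where "orthogonal_projector P" "P ** mpow M k = mpow M k" "M ** P = P ** M ** P"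
    "P ** Y ** P = Y" "P ** M ** P ** Y = P" "Y ** (P ** M ** P) = P"
proof -
  obtain k W where W: "mpow M k = mpow M (Suc k) ** W"
    by (rule range_mpow_stabilizes)
  obtain P Z where P: "orthogonal_projector P" and PK: "P ** mpow M k = mpow M k"
    and Z: "P = mpow M k ** Z"
    by (rule orthogonal_projector_onto_range)
  have PP: "P ** P = P"
    using P orthogonal_projector_def by blast
  \<comment> \<open>M G = P, so that G P is a right corner inverse of P M P.\<close>
  define G where "G = mpow M k ** W ** Z"
  have MG: "M ** G = P"
    by (metis G_def W Z matrix_mul_assoc mpow.simps(2))
  have PG: "P ** G = G"
    by (simp add: G_def PK matrix_mul_assoc)
  have "M ** P = mpow M k ** M ** Z"
    by (metis Z matrix_mul_assoc mpow.simps(2) mpow_Suc_right)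
  then have MP: "M ** P = P ** M ** P"
    by (metis PK matrix_mul_assoc)
  define Y where "Y = G ** P"
  have Y: "P ** Y ** P = Y"
    by (metis Y_def PG PP matrix_mul_assoc)
  have MY: "P ** M ** P ** Y = P"
    by (metis Y_def MG MP PG PP matrix_mul_assoc)
  moreover have "P ** (P ** M ** P) ** P = P ** M ** P"
    by (metis PP matrix_mul_assoc)
  ultimately have "Y ** (P ** M ** P) = P"
    using corner_left_right_inverse PP Y by blast
  with P PK MP Y MY show thesis by (rule that)
qed

lemma nilpotent_compression_complement:
  fixes M P :: "'n::finite cmat"
  assumes MP: "M ** P = P ** M ** P" and PK: "P ** mpow M k = mpow M k"
  shows "nilpotent_mat ((mat 1 - P) ** M ** (mat 1 - P))"
proof -
  define R where "R = mat 1 - P"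
  have RMR: "R ** M ** R = R ** M"
    using MP by (simp add: R_def matrix_distribs flip: matrix_mul_assoc)
  have pow: "mpow (R ** M) (Suc j) = R ** mpow M (Suc j)" for j
  proof (induction j)
    case (Suc j)
    have "mpow (R ** M) (Suc (Suc j)) = R ** M ** R ** mpow M (Suc j)"
      using Suc by (simp only: mpow.simps(2)[of _ "Suc j"] matrix_mul_assoc)
    also have "\<dots> = R ** mpow M (Suc (Suc j))"
      by (simp only: RMR mpow.simps(2)[of _ "Suc j"] matrix_mul_assoc)
    finally show ?case .
  qed simp
  have "R ** mpow M k = 0"
    using PK by (simp add: R_def matrix_diff_rdistrib)
  then have "mpow (R ** M) (Suc k) = 0"
    by (simp only: pow mpow_Suc_right[of M] matrix_mul_assoc times0_left)
  then show ?thesis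
    unfolding nilpotent_mat_def R_def[symmetric] RMR by blast
qed

lemma mult_mpow_Suc_eq_mono:
  assumes "X ** mpow A (Suc k) = mpow A k" "k \<le> m"
  shows "X ** mpow A (Suc m) = mpow A m"
  using assms(2)
proof (induction m rule: dec_induct)
  case (step m)
  then show ?case
    by (metis mpow_Suc_right matrix_mul_assoc)
qed (use assms(1) in simp)

lemma eq_mpow_mult_mpow_Suc:
  assumes "A ** (X ** X) = X"
  shows "X = mpow A m ** mpow X (Suc m)"
proof (induction m)
  case (Suc m)
  have "mpow A (Suc m) ** mpow X (Suc (Suc m)) = mpow A m ** ((A ** (X ** X)) ** mpow X m)"
    by (simp only: mpow_Suc_right[of A] mpow.simps(2)[of X] matrix_mul_assoc)
  with Suc assms show ?case by simp
qed simp

lemma hermitian_projector_unique: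
  fixes P1 P2 K :: "'n::finite cmat"
  assumes "cadj P1 = P1" "cadj P2 = P2" "P1 ** K = K" "P2 ** K = K" "P1 = K ** W1" "P2 = K ** W2"
  shows "P1 = P2"
proof -
  have "P1 ** P2 = P2" "P2 ** P1 = P1"
    using assms(3-6) by (metis matrix_mul_assoc)+
  then show ?thesis
    by (metis assms(1,2) cadj_matrix_mult)
qed

lemma is_core_EP_inv_unique:
  fixes A :: "'n::finite cmat"
  assumes "is_core_EP_inv A X1" "is_core_EP_inv A X2"
  shows "X1 = X2"
proof -
  obtain k1 k2 where "X1 ** mpow A (Suc k1) = mpow A k1" "X2 ** mpow A (Suc k2) = mpow A k2"
    using assms unfolding is_core_EP_inv_def by auto
  then obtain k where k: "X1 ** mpow A (Suc k) = mpow A k" "X2 ** mpow A (Suc k) = mpow A k"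
    using mult_mpow_Suc_eq_mono[of _ A _ "max k1 k2"] by (meson max.cobounded1 max.cobounded2)
  have sq: "A ** (X1 ** X1) = X1" "A ** (X2 ** X2) = X2"
    using assms unfolding is_core_EP_inv_def by auto
  \<comment> \<open>Both A X1 and A X2 are Hermitian projectors fixing and factoring through A^k.\<close>
  have props: "A ** X ** mpow A k = mpow A k" "A ** X = mpow A k ** (A ** mpow X (Suc k))"
    "X ** A ** X = X"
    if "X ** mpow A (Suc k) = mpow A k" "A ** (X ** X) = X" for X
  proof -
    have X: "X = mpow A k ** mpow X (Suc k)"
      by (rule eq_mpow_mult_mpow_Suc[OF that(2)])
    show "A ** X ** mpow A k = mpow A k"
      by (metis that matrix_mul_assoc)
    show "A ** X = mpow A k ** (A ** mpow X (Suc k))"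
      by (metis X matrix_mul_assoc mpow.simps(2) mpow_Suc_right)
    show "X ** A ** X = X"
      by (metis X that(1) matrix_mul_assoc mpow.simps(2))
  qed
  have "A ** X1 = A ** X2"
    using assms props[OF k(1) sq(1)] props[OF k(2) sq(2)]
    unfolding is_core_EP_inv_def by (metis hermitian_projector_unique)
  then have "X1 = X1 ** A ** X2"
    using props(3)[OF k(1) sq(1)] by (metis matrix_mul_assoc)
  also have "\<dots> = X2"
    by (metis eq_mpow_mult_mpow_Suc[OF sq(2)] k(1) matrix_mul_assoc mpow.simps(2))
  finally show ?thesis .
qed

lemma core_EP_eqI: "is_core_EP_inv A X \<Longrightarrow> core_EP A = X"
  unfolding core_EP_def using is_core_EP_inv_unique by blast

lemma core_EP_projection:
  fixes A :: "'n::finite cmat"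
  defines "P \<equiv> A ** core_EP A"
  shows "orthogonal_projector P" "A ** P = P ** A ** P"
    "P ** core_EP A ** P = core_EP A" "P ** A ** P ** core_EP A = P"
    "core_EP A ** (P ** A ** P) = P" "corner_invertible P (P ** A ** P)"
    "nilpotent_mat ((mat 1 - P) ** A ** (mat 1 - P))"
proof -
  obtain Q Y k where Q: "orthogonal_projector Q" and QK: "Q ** mpow A k = mpow A k"
    and AQ: "A ** Q = Q ** A ** Q"
    and Y: "Q ** Y ** Q = Y" "Q ** A ** Q ** Y = Q" "Y ** (Q ** A ** Q) = Q"
    by (rule core_EP_decomposition)
  have QQ: "Q ** Q = Q" "cadj Q = Q"
    using Q orthogonal_projector_def by auto
  have AY: "A ** Y = Q"
    by (metis Y(1,2) AQ QQ(1) matrix_mul_assoc)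
  have "is_core_EP_inv A Y"
    unfolding is_core_EP_inv_def
  proof (intro conjI exI)
    show "Y ** mpow A (k + 1) = mpow A k"
      by (metis AQ QK Y(3) Suc_eq_plus1 matrix_mul_assoc mpow.simps(2))
    show "A ** (Y ** Y) = Y"
      by (metis AY Y(1) QQ(1) matrix_mul_assoc)
    show "cadj (A ** Y) = A ** Y"
      by (simp add: AY QQ(2))
  qed
  then have "core_EP A = Y"
    by (rule core_EP_eqI)
  moreover have "P = Q"
    using calculation AY P_def by simp
  ultimately show "orthogonal_projector P" "A ** P = P ** A ** P"
    "P ** core_EP A ** P = core_EP A" "P ** A ** P ** core_EP A = P"
    "core_EP A ** (P ** A ** P) = P" "corner_invertible P (P ** A ** P)"
    "nilpotent_mat ((mat 1 - P) ** A ** (mat 1 - P))"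
    using Q AQ Y corner_invertibleI[OF QQ(1) Y] nilpotent_compression_complement[OF AQ QK]
    by simp_all
qed

lemma core_EP_le_iff:
  fixes A B :: "'n::finite cmat"
  defines "P \<equiv> A ** core_EP A"
  shows "core_EP_le A B \<longleftrightarrow> P ** B = P ** A \<and> B ** P = A ** P"
proof -
  define X where "X = core_EP A"
  have X: "P ** X ** P = X" and TX: "P ** A ** P ** X = P" and XT: "X ** (P ** A ** P) = P"
    and AP: "A ** P = P ** A ** P" and PP: "P ** P = P"
    using core_EP_projection[of A] unfolding P_def X_def orthogonal_projector_def by auto
  have PX: "P ** X = X" and XP: "X ** P = X"
    using X PP by (metis matrix_mul_assoc)+
  \<comment> \<open>X is the corner inverse of P A P: multiply by P A P, resp. by X, to pass between the sides.\<close>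
  have "A ** X = B ** X \<longleftrightarrow> B ** P = A ** P"
    by (metis AP XT PX P_def X_def matrix_mul_assoc)
  moreover have "X ** A = X ** B \<longleftrightarrow> P ** B = P ** A"
    by (metis TX XP matrix_mul_assoc)
  ultimately show ?thesis
    unfolding core_EP_le_def X_def by blast
qed

lemma core_EP_decomposition_compression:
  fixes P B :: "'n::finite cmat"
  assumes P: "orthogonal_projector P"
  obtains Q where "orthogonal_projector Q" "P ** Q = 0" "Q ** P = 0"
    "(mat 1 - P - Q) ** B ** Q = 0" "corner_invertible Q (Q ** B ** Q)"
    "nilpotent_mat ((mat 1 - P - Q) ** B ** (mat 1 - P - Q))"
proof -
  define R where "R = mat 1 - P"
  obtain Q Y k where Q: "orthogonal_projector Q"
    and QK: "Q ** mpow (R ** B ** R) k = mpow (R ** B ** R) k"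
    and BQ: "R ** B ** R ** Q = Q ** (R ** B ** R) ** Q"
    and Y: "Q ** Y ** Q = Y" "Q ** (R ** B ** R) ** Q ** Y = Q" "Y ** (Q ** (R ** B ** R) ** Q) = Q"
    by (rule core_EP_decomposition)
  have PP: "P ** P = P" "cadj P = P" and QQ: "Q ** Q = Q" "cadj Q = Q"
    using P Q orthogonal_projector_def by auto
  \<comment> \<open>Q = R B R Y lies in the range of R = I - P, hence is orthogonal to P.\<close>
  have "R ** B ** R ** Y = Q"
    by (metis Y(1,2) BQ QQ(1) matrix_mul_assoc)
  moreover have "P ** R = 0"
    by (simp add: R_def matrix_diff_ldistrib PP)
  ultimately have PQ: "P ** Q = 0"
    by (metis matrix_mul_assoc times0_left)
  then have QP: "Q ** P = 0"
    by (metis PP(2) QQ(2) cadj_matrix_mult cadj_zero)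
  have RQ: "R ** Q = Q" and QR: "Q ** R = Q"
    by (simp_all add: R_def matrix_distribs PQ QP)
  have E3: "mat 1 - P - Q = (mat 1 - Q) ** R" "mat 1 - P - Q = R ** (mat 1 - Q)"
    by (simp_all add: R_def matrix_distribs PQ QP)
  show thesis
  proof (rule that)
    have "(mat 1 - P - Q) ** B ** Q = (mat 1 - Q) ** (R ** B ** R ** Q)"
      by (metis E3(1) RQ matrix_mul_assoc)
    then show "(mat 1 - P - Q) ** B ** Q = 0"
      by (simp add: BQ matrix_diff_rdistrib matrix_mul_assoc QQ(1))
    show "corner_invertible Q (Q ** B ** Q)"
      using corner_invertibleI[OF QQ(1) Y] by (metis QR RQ matrix_mul_assoc)
    show "nilpotent_mat ((mat 1 - P - Q) ** B ** (mat 1 - P - Q))"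
      using nilpotent_compression_complement[OF BQ QK] by (metis E3 matrix_mul_assoc)
  qed (use Q PQ QP in auto)
qed

lemma idem_system3_complement:
  assumes "P ** P = P" "Q ** Q = Q" "P ** Q = 0" "Q ** P = 0"
  shows "idem_system3 P Q (mat 1 - P - Q)"
  using assms by (simp add: idem_system3_def matrix_distribs)

lemma same_first_block_row_col:
  assumes E: "E1 + E2 + E3 = mat 1"
    and row: "E1 ** B ** E1 = E1 ** A ** E1" "E1 ** B ** E2 = E1 ** A ** E2"
      "E1 ** B ** E3 = E1 ** A ** E3"
    and col: "E2 ** B ** E1 = E2 ** A ** E1" "E3 ** B ** E1 = E3 ** A ** E1"
  shows "E1 ** B = E1 ** A \<and> B ** E1 = A ** E1"
proof
  have "E1 ** B ** (E1 + E2 + E3) = E1 ** A ** (E1 + E2 + E3)"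
    using row by (simp add: matrix_add_ldistrib)
  then show "E1 ** B = E1 ** A"
    by (simp add: E)
  have "(E1 + E2 + E3) ** B ** E1 = (E1 + E2 + E3) ** A ** E1"
    using row(1) col by (simp add: matrix_add_rdistrib)
  then show "B ** E1 = A ** E1"
    by (simp add: E)
qed

lemma block_below_invariant_eq_0: "E ** P = 0 \<Longrightarrow> M ** P = P ** M ** P \<Longrightarrow> E ** M ** P = 0"
  by (metis matrix_mul_assoc times0_left)

lemma matrix_sandwich_add:
  "(E + F) ** M ** (E + F) = E ** M ** E + E ** M ** F + F ** M ** E + F ** M ** F"
  by (simp add: matrix_add_ldistrib matrix_add_rdistrib add_ac)

theorem corollary4p5:
  fixes A B :: "complex ^'n::finite ^'n"
  shows "core_EP_le A B \<longleftrightarrow>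
    (\<exists>E1 E2 E3 T1 S1 S2 N1 N2 N3 N4 T3 T4 T5.
       E1 = A ** core_EP A \<and> cadj E2 = E2 \<and> E2 ** E2 = E2 \<and> E3 = mat 1 - E1 - E2 \<and>
       idem_system3 E1 E2 E3 \<and>
       E1 ** A ** E1 = T1 \<and> E1 ** A ** E2 = S1 \<and> E1 ** A ** E3 = S2 \<and>
       E2 ** A ** E1 = 0 \<and> E2 ** A ** E2 = N1 \<and> E2 ** A ** E3 = N2 \<and>
       E3 ** A ** E1 = 0 \<and> E3 ** A ** E2 = N3 \<and> E3 ** A ** E3 = N4 \<and>
       E1 ** B ** E1 = T1 \<and> E1 ** B ** E2 = S1 \<and> E1 ** B ** E3 = S2 \<and>
       E2 ** B ** E1 = 0 \<and> E2 ** B ** E2 = T3 \<and> E2 ** B ** E3 = T4 \<and>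
       E3 ** B ** E1 = 0 \<and> E3 ** B ** E2 = 0 \<and> E3 ** B ** E3 = T5 \<and>
       corner_invertible E1 T1 \<and> corner_invertible E2 T3 \<and>
       nilpotent_mat (N1 + N2 + N3 + N4) \<and> nilpotent_mat T5)"
  (is "?L \<longleftrightarrow> ?R")
proof -
  define P where "P = A ** core_EP A"
  note P = core_EP_projection[of A, folded P_def]
  show ?thesis
  proof
    assume ?L
    then have PB: "P ** B = P ** A" and BP: "B ** P = P ** B ** P"
      using core_EP_le_iff[of A B] P(2) unfolding P_def by (auto simp: matrix_mul_assoc)
    obtain Q where Q: "orthogonal_projector Q" "P ** Q = 0" "Q ** P = 0"
      "(mat 1 - P - Q) ** B ** Q = 0" "corner_invertible Q (Q ** B ** Q)"
      "nilpotent_mat ((mat 1 - P - Q) ** B ** (mat 1 - P - Q))"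
      using core_EP_decomposition_compression[OF P(1)] by blast
    define E3 where "E3 = mat 1 - P - Q"
    have sys: "idem_system3 P Q E3"
      using P(1) Q(1-3) idem_system3_complement unfolding E3_def orthogonal_projector_def by blast
    then have zero: "Q ** A ** P = 0" "E3 ** A ** P = 0" "Q ** B ** P = 0" "E3 ** B ** P = 0"
      using P(2) BP block_below_invariant_eq_0 unfolding idem_system3_def by blast+
    have N: "Q ** A ** Q + Q ** A ** E3 + E3 ** A ** Q + E3 ** A ** E3
        = (mat 1 - P) ** A ** (mat 1 - P)"
      using matrix_sandwich_add[of Q E3 A] by (simp add: E3_def)
    show ?R
      unfolding P_def[symmetric]
      by (rule exI[of _ P, OF exI[of _ Q, OF exI[of _ E3]]])
        (use P PB Q zero N sys in \<open>simp add: E3_def orthogonal_projector_def\<close>)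
  next
    assume ?R
    then obtain E2 E3 where "idem_system3 P E2 E3" "P ** B ** P = P ** A ** P"
      "P ** B ** E2 = P ** A ** E2" "P ** B ** E3 = P ** A ** E3"
      "E2 ** B ** P = E2 ** A ** P" "E3 ** B ** P = E3 ** A ** P"
      unfolding P_def[symmetric] by auto
    then have "P ** B = P ** A \<and> B ** P = A ** P"
      using same_first_block_row_col[of P E2 E3 B A] unfolding idem_system3_def by blast
    then show ?L
      using core_EP_le_iff[of A B] unfolding P_def by blast
  qed
qed

end
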